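(* Let $\mathscr{C}$ be a hereditary graph class closed under disjoint union, let $\Pi$ be a $\rho$-local minimization problem which is cuttable for $\mathscr{C}$ with parameter $\beta>0$, and let $\varepsilon>0$. Then for every integer $r\ge0$ and real $\alpha>0$, every deterministic LOCAL algorithm $\mathsf{A}$ (in the LOCAL model with polynomially bounded identifiers) with round complexity $r$ that is an $\alpha$-approximation for $\Pi$ on $\mathscr{C}$ is an $\varepsilon$-weakly $(r+1)$-uniform $\alpha\beta$-approximation for $\Pi$ on $\mathscr{C}$.
   Context: Hereditary: closed under vertex deletion. $N^t[S]$ is the set of vertices at distance at most $t$ from $S$. Deterministic LOCAL model: vertices have distinct positive integer identifiers bounded by a polynomial in $n=|V(G)|$, and guarantees are required to hold for every fixed polynomial bound; synchronous rounds of unbounded message exchange with neighbours and unbounded local computation; with round complexity $r$ the output of $v$ depends only on vertices at distance at most $r$ from $v$, their identifiers, and incident edges. $\mathsf{A}(G)$ is the output set. Problems: $\Pi$ (feasible solutions are vertex subsets) is $\rho$-local if there is a LOCAL verifier with round complexity $\rho$ which accepts at every vertex iff the given $S\subseteq V(G)$ is feasible; $S$ is feasible on $X$ if the verifier accepts at every vertex of $X$; $\mathrm{OPT}_\Pi(G,X)$ is the minimum size of a set feasible on $X$; $\mathrm{OPT}_\Pi(G)=\mathrm{OPT}_\Pi(G,V(G))$. $\Pi$ is cuttable for $\mathscr{C}$ with parameter $\beta$ if for all $G\in\mathscr{C}$ and $X\subseteq V(G)$ there is $Y$ with $X\subseteq Y\subseteq V(G)$ and $\mathrm{OPT}_\Pi(G[Y])\le\beta\,\mathrm{OPT}_\Pi(G,X)$.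 $\mathsf{A}$ is an $\alpha$-approximation on $\mathscr{C}$ if on each $G\in\mathscr{C}$ it outputs a feasible solution of size at most $\alpha\,\mathrm{OPT}_\Pi(G)$; it is an $\varepsilon$-weakly $k$-uniform $\gamma$-approximation if it outputs feasible solutions and $|\mathsf{A}(G)\cap S|\le\gamma\,\mathrm{OPT}_\Pi(G,N^k[S])$ for all $G\in\mathscr{C}$ and all $S\subseteq V(G)$ with $|S|\ge\lfloor\varepsilon|V(G)|\rfloor$. *)

theory Defs
  imports "HOL-Computational_Algebra.Polynomial"
begin

text \<open>A graph is a pair (vertex set, edge set); edges are 2-element subsets of the vertex set.\<close>
type_synonym 'v graph = "'v set \<times> 'v set set"

definition verts :: "'v graph \<Rightarrow> 'v set" where "verts G = fst G"
definition edges :: "'v graph \<Rightarrow> 'v set set" where "edges G = snd G"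

definition wf_graph :: "'v graph \<Rightarrow> bool" where
  "wf_graph G \<longleftrightarrow> finite (verts G) \<and> (\<forall>e\<in>edges G. e \<subseteq> verts G \<and> card e = 2)"

definition adj :: "'v graph \<Rightarrow> 'v \<Rightarrow> 'v \<Rightarrow> bool" where
  "adj G u v \<longleftrightarrow> {u, v} \<in> edges G"

fun nbhd :: "'v graph \<Rightarrow> nat \<Rightarrow> 'v set \<Rightarrow> 'v set" where
  "nbhd G 0 S = S \<inter> verts G"
| "nbhd G (Suc t) S = nbhd G t S \<union> {v \<in> verts G. \<exists>u \<in> nbhd G t S. adj G u v}"

definition induced :: "'v graph \<Rightarrow> 'v set \<Rightarrow> 'v graph" where
  "induced G Y = (verts G \<inter> Y, {e \<in> edges G. e \<subseteq> Y})"

definition gunion :: "'v graph \<Rightarrow> 'v graph \<Rightarrow> 'v graph" where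
  "gunion G H = (verts G \<union> verts H, edges G \<union> edges H)"

definition hereditary :: "'v graph set \<Rightarrow> bool" where
  "hereditary C \<longleftrightarrow> (\<forall>G\<in>C. \<forall>v. induced G (verts G - {v}) \<in> C)"

definition closed_disjoint_union :: "'v graph set \<Rightarrow> bool" where
  "closed_disjoint_union C \<longleftrightarrow>
     (\<forall>G\<in>C. \<forall>H\<in>C. verts G \<inter> verts H = {} \<longrightarrow> gunion G H \<in> C)"

definition graph_class :: "'v graph set \<Rightarrow> bool" where
  "graph_class C \<longleftrightarrow> (\<forall>G\<in>C. wf_graph G)"

definition incident_edges :: "'v graph \<Rightarrow> 'v set \<Rightarrow> 'v set set" where
  "incident_edges G B = {e \<in> edges G. e \<inter> B \<noteq> {}}"

definition same_view :: "nat \<Rightarrow> 'v graph \<Rightarrow> ('v \<Rightarrow> 'l) \<Rightarrow> 'v graph \<Rightarrow> ('v \<Rightarrow> 'l) \<Rightarrow> 'v \<Rightarrow> bool" where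
  "same_view r G lab G' lab' v \<longleftrightarrow>
     v \<in> verts G \<and> v \<in> verts G' \<and>
     nbhd G r {v} = nbhd G' r {v} \<and>
     (\<forall>u \<in> nbhd G r {v}. lab u = lab' u) \<and>
     incident_edges G (nbhd G r {v}) = incident_edges G' (nbhd G' r {v})"

text \<open>A deterministic LOCAL algorithm: vertex v (of G with identifier assignment id) is in the
  alg_output iff A G id v. Round complexity r: the alg_output of v depends only on its r-view.\<close>
definition local_alg :: "nat \<Rightarrow> ('v graph \<Rightarrow> ('v \<Rightarrow> nat) \<Rightarrow> 'v \<Rightarrow> bool) \<Rightarrow> bool" where
  "local_alg r A \<longleftrightarrow>
     (\<forall>G G' idf idf' v. wf_graph G \<longrightarrow> wf_graph G' \<longrightarrow> same_view r G idf G' idf' v \<longrightarrow>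
        (A G idf v \<longleftrightarrow> A G' idf' v))"

definition alg_output :: "('v graph \<Rightarrow> ('v \<Rightarrow> nat) \<Rightarrow> 'v \<Rightarrow> bool) \<Rightarrow> 'v graph \<Rightarrow> ('v \<Rightarrow> nat) \<Rightarrow> 'v set" where
  "alg_output A G idf = {v \<in> verts G. A G idf v}"

definition valid_ids :: "real poly \<Rightarrow> 'v graph \<Rightarrow> ('v \<Rightarrow> nat) \<Rightarrow> bool" where
  "valid_ids p G idf \<longleftrightarrow> inj_on idf (verts G) \<and>
     (\<forall>v \<in> verts G. 0 < idf v \<and> real (idf v) \<le> poly p (real (card (verts G))))"

text \<open>Verifier: ver G S v says whether the verifier accepts at v for candidate solution S.
  Its round complexity is rho: the decision depends only on the rho-view labelled by
  membership in S.\<close>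
definition local_verifier :: "nat \<Rightarrow> ('v graph \<Rightarrow> 'v set \<Rightarrow> 'v \<Rightarrow> bool) \<Rightarrow> bool" where
  "local_verifier \<rho> ver \<longleftrightarrow>
     (\<forall>G G' S S' v. wf_graph G \<longrightarrow> wf_graph G' \<longrightarrow>
        same_view \<rho> G (\<lambda>u. u \<in> S) G' (\<lambda>u. u \<in> S') v \<longrightarrow> (ver G S v \<longleftrightarrow> ver G' S' v))"

text \<open>Pi (given by its feasibility predicate feas) is rho-local, witnessed by verifier ver.\<close>
definition rho_local :: "nat \<Rightarrow> ('v graph \<Rightarrow> 'v set \<Rightarrow> bool) \<Rightarrow> ('v graph \<Rightarrow> 'v set \<Rightarrow> 'v \<Rightarrow> bool) \<Rightarrow> bool" where
  "rho_local \<rho> feas ver \<longleftrightarrow> local_verifier \<rho> ver \<and>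
     (\<forall>G S. wf_graph G \<longrightarrow> S \<subseteq> verts G \<longrightarrow> (feas G S \<longleftrightarrow> (\<forall>v \<in> verts G. ver G S v)))"

definition feasible_on :: "('v graph \<Rightarrow> 'v set \<Rightarrow> 'v \<Rightarrow> bool) \<Rightarrow> 'v graph \<Rightarrow> 'v set \<Rightarrow> 'v set \<Rightarrow> bool" where
  "feasible_on ver G S X \<longleftrightarrow> (\<forall>x \<in> X. ver G S x)"

definition OPT_on :: "('v graph \<Rightarrow> 'v set \<Rightarrow> 'v \<Rightarrow> bool) \<Rightarrow> 'v graph \<Rightarrow> 'v set \<Rightarrow> nat" where
  "OPT_on ver G X = Inf (card ` {S. S \<subseteq> verts G \<and> feasible_on ver G S X})"

definition OPT :: "('v graph \<Rightarrow> 'v set \<Rightarrow> 'v \<Rightarrow> bool) \<Rightarrow> 'v graph \<Rightarrow> nat" where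
  "OPT ver G = OPT_on ver G (verts G)"

definition cuttable :: "('v graph \<Rightarrow> 'v set \<Rightarrow> 'v \<Rightarrow> bool) \<Rightarrow> 'v graph set \<Rightarrow> real \<Rightarrow> bool" where
  "cuttable ver C \<beta> \<longleftrightarrow>
     (\<forall>G \<in> C. \<forall>X. X \<subseteq> verts G \<longrightarrow>
        (\<exists>Y. X \<subseteq> Y \<and> Y \<subseteq> verts G \<and>
             real (OPT ver (induced G Y)) \<le> \<beta> * real (OPT_on ver G X)))"

definition approximation ::
  "('v graph \<Rightarrow> 'v set \<Rightarrow> bool) \<Rightarrow> ('v graph \<Rightarrow> 'v set \<Rightarrow> 'v \<Rightarrow> bool) \<Rightarrow> 'v graph set \<Rightarrow> real
     \<Rightarrow> ('v graph \<Rightarrow> ('v \<Rightarrow> nat) \<Rightarrow> 'v \<Rightarrow> bool) \<Rightarrow> bool" where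
  "approximation feas ver C \<alpha> A \<longleftrightarrow>
     (\<forall>p G idf. G \<in> C \<longrightarrow> valid_ids p G idf \<longrightarrow>
        feas G (alg_output A G idf) \<and> real (card (alg_output A G idf)) \<le> \<alpha> * real (OPT ver G))"

definition weakly_uniform_approximation ::
  "('v graph \<Rightarrow> 'v set \<Rightarrow> bool) \<Rightarrow> ('v graph \<Rightarrow> 'v set \<Rightarrow> 'v \<Rightarrow> bool) \<Rightarrow> 'v graph set \<Rightarrow> real \<Rightarrow> nat \<Rightarrow> real
     \<Rightarrow> ('v graph \<Rightarrow> ('v \<Rightarrow> nat) \<Rightarrow> 'v \<Rightarrow> bool) \<Rightarrow> bool" where
  "weakly_uniform_approximation feas ver C \<epsilon> k \<gamma> A \<longleftrightarrow>
     (\<forall>p G idf. G \<in> C \<longrightarrow> valid_ids p G idf \<longrightarrow>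
        feas G (alg_output A G idf) \<and>
        (\<forall>S. S \<subseteq> verts G \<longrightarrow> real (card S) \<ge> of_int \<lfloor>\<epsilon> * real (card (verts G))\<rfloor> \<longrightarrow>
           real (card (alg_output A G idf \<inter> S)) \<le> \<gamma> * real (OPT_on ver G (nbhd G k S))))"

end

theory Submission
  imports Defs
begin

text \<open>Cut G around the (r+1)-neighbourhood X of S: by cuttability there is Y \<supseteq> X with
  OPT(G[Y]) \<le> \<beta> OPT(G, X). Every vertex of S has the same r-view in G and in G[Y], so the
  algorithm selects the same vertices of S in both graphs, and on G[Y] it is an
  \<alpha>-approximation. Hence |A(G) \<inter> S| \<le> |A(G[Y])| \<le> \<alpha> OPT(G[Y]) \<le> \<alpha>\<beta> OPT(G, X).
  Identifiers of G remain valid on G[Y] for a constant bound, and the approximation guarantee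
  holds for every bound.\<close>

lemma nbhd_subset_verts: "nbhd G t S \<subseteq> verts G"
  by (induction t) auto

lemma nbhd_mono: "s \<le> t \<Longrightarrow> nbhd G s S \<subseteq> nbhd G t S"
  using lift_Suc_mono_le[of "\<lambda>t. nbhd G t S"] by auto

lemma nbhd_mono_set: "S \<subseteq> T \<Longrightarrow> nbhd G t S \<subseteq> nbhd G t T"
  by (induction t) auto

lemma subset_nbhd: "S \<subseteq> verts G \<Longrightarrow> S \<subseteq> nbhd G t S"
  using nbhd_mono[of 0 t G S] by auto

lemma verts_induced [simp]: "verts (induced G Y) = verts G \<inter> Y"
  by (simp add: induced_def verts_def)

lemma edges_induced [simp]: "edges (induced G Y) = {e \<in> edges G. e \<subseteq> Y}"
  by (simp add: induced_def edges_def)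

lemma adj_induced [simp]: "adj (induced G Y) u w \<longleftrightarrow> adj G u w \<and> u \<in> Y \<and> w \<in> Y"
  by (auto simp: adj_def)

lemma nbhd_induced:
  assumes "nbhd G t T \<subseteq> Y"
  shows "nbhd (induced G Y) t T = nbhd G t T"
  using assms
proof (induction t)
  case 0
  then show ?case by (auto simp: induced_def verts_def)
next
  case (Suc t)
  have ball_in_Y: "nbhd G t T \<subseteq> Y"
    using Suc.prems nbhd_mono[of t "Suc t" G T] by auto
  then have "nbhd (induced G Y) t T = nbhd G t T"
    using Suc.IH by blast
  then show ?case
    using ball_in_Y Suc.prems by fastforce
qed

lemma incident_edge_subset_nbhd:
  assumes "wf_graph G" and "e \<in> incident_edges G (nbhd G t T)"
  shows "e \<subseteq> nbhd G (Suc t) T"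
proof -
  have e: "e \<in> edges G" "e \<inter> nbhd G t T \<noteq> {}"
    using assms(2) by (auto simp: incident_edges_def)
  moreover have "e \<subseteq> verts G" "card e = 2"
    using assms(1) e(1) by (auto simp: wf_graph_def)
  ultimately obtain a b where ab: "e = {a, b}" "a \<in> verts G" "b \<in> verts G"
    by (metis card_2_iff insert_subset)
  then have "adj G a b" "adj G b a"
    using e by (auto simp: adj_def insert_commute)
  then show ?thesis
    using e ab by auto
qed

lemma incident_edges_induced:
  assumes "wf_graph G" and "nbhd G (Suc t) T \<subseteq> Y"
  shows "incident_edges (induced G Y) (nbhd G t T) = incident_edges G (nbhd G t T)"
  using incident_edge_subset_nbhd[OF assms(1)] assms(2)
  by (fastforce simp: incident_edges_def induced_def edges_def)

lemma same_view_induced: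
  assumes "wf_graph G" and "v \<in> verts G" and "nbhd G (Suc r) {v} \<subseteq> Y"
  shows "same_view r G lab (induced G Y) lab v"
proof -
  have ball_in_Y: "nbhd G r {v} \<subseteq> Y"
    using assms(3) nbhd_mono[of r "Suc r" G "{v}"] by auto
  have "v \<in> Y"
    using assms(2,3) subset_nbhd[of "{v}" G "Suc r"] by auto
  then show ?thesis
    using assms ball_in_Y
    by (simp add: same_view_def nbhd_induced incident_edges_induced)
qed

lemma local_alg_induced_iff:
  assumes "local_alg r A" and "wf_graph G" and "wf_graph (induced G Y)"
    and "v \<in> verts G" and "nbhd G (Suc r) {v} \<subseteq> Y"
  shows "A (induced G Y) idf v \<longleftrightarrow> A G idf v"
  using assms same_view_induced[OF assms(2,4,5)] unfolding local_alg_def by blast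

lemma induced_Int_verts:
  assumes "wf_graph G"
  shows "induced G (verts G \<inter> Y) = induced G Y"
  using assms by (auto simp: induced_def wf_graph_def)

lemma hereditary_induced_mem:
  assumes "hereditary C" and "graph_class C" and "G \<in> C"
  shows "induced G Y \<in> C"
proof -
  have wf: "wf_graph G"
    using assms(2,3) by (simp add: graph_class_def)
  have "induced G (verts G - D) \<in> C" if "finite D" for D
    using that
  proof (induction D rule: finite_induct)
    case empty
    have "induced G (verts G) = G"
      using wf by (cases G) (auto simp: induced_def verts_def edges_def wf_graph_def)
    then show ?case
      using assms(3) by simp
  next
    case (insert v D)
    let ?H = "induced G (verts G - D)"
    have "induced ?H (verts ?H - {v}) = induced G (verts G - insert v D)"
      by (auto simp: induced_def verts_def edges_def)
    then show ?case
      using insert.IH assms(1) unfolding hereditary_def by metis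
  qed
  moreover have "finite (verts G - Y)"
    using wf by (simp add: wf_graph_def)
  ultimately have "induced G (verts G - (verts G - Y)) \<in> C" .
  moreover have "verts G - (verts G - Y) = verts G \<inter> Y"
    by blast
  ultimately show ?thesis
    using induced_Int_verts[OF wf] by simp
qed

text \<open>A polynomial bound in |V(G)| need not survive passing to a smaller subgraph, so the
  identifiers are bounded by a constant instead.\<close>
lemma valid_ids_induced:
  assumes "valid_ids p G idf" and "finite (verts G)"
  shows "valid_ids [:real (\<Sum>u\<in>verts G. idf u):] (induced G Y) idf"
proof -
  have "idf v \<le> (\<Sum>u\<in>verts G. idf u)" if "v \<in> verts G" for v
    using member_le_sum[of v "verts G" idf] that assms(2) by simp
  then show ?thesis
    using assms(1)
    by (auto simp del: of_nat_sum simp: valid_ids_def intro: inj_on_subset)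
qed

lemma finite_alg_output: "wf_graph G \<Longrightarrow> finite (alg_output A G idf)"
  by (simp add: alg_output_def wf_graph_def)

lemma card_alg_output_Int_le_OPT_induced:
  assumes "graph_class C" and "local_alg r A" and "approximation feas ver C \<alpha> A"
    and "G \<in> C" and "induced G Y \<in> C" and "valid_ids p G idf"
    and "S \<subseteq> verts G" and "nbhd G (Suc r) S \<subseteq> Y"
  shows "real (card (alg_output A G idf \<inter> S)) \<le> \<alpha> * real (OPT ver (induced G Y))"
proof -
  let ?H = "induced G Y"
  have wf: "wf_graph G" "wf_graph ?H"
    using assms(1,4,5) by (auto simp: graph_class_def)
  have "S \<subseteq> Y"
    using order_trans[OF subset_nbhd[OF assms(7)] assms(8)] .
  moreover have "A ?H idf v \<longleftrightarrow> A G idf v" if "v \<in> S" for v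
  proof -
    have "nbhd G (Suc r) {v} \<subseteq> Y"
      using order_trans[OF nbhd_mono_set assms(8)] that by blast
    then show ?thesis
      using local_alg_induced_iff[OF assms(2) wf] that assms(7) by blast
  qed
  ultimately have "alg_output A G idf \<inter> S \<subseteq> alg_output A ?H idf"
    using assms(7) by (auto simp: alg_output_def)
  moreover have "finite (alg_output A ?H idf)"
    using wf(2) by (rule finite_alg_output)
  ultimately have "card (alg_output A G idf \<inter> S) \<le> card (alg_output A ?H idf)"
    by (rule card_mono[rotated])
  also have "real (card (alg_output A ?H idf)) \<le> \<alpha> * real (OPT ver ?H)"
    using assms(3,5) valid_ids_induced[OF assms(6)] wf(1)
    unfolding approximation_def wf_graph_def by blast
  finally show ?thesis
    by simp
qed

theorem mainTheorem11:
  fixes C :: "'v graph set"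
    and feas :: "'v graph \<Rightarrow> 'v set \<Rightarrow> bool"
    and ver :: "'v graph \<Rightarrow> 'v set \<Rightarrow> 'v \<Rightarrow> bool"
    and \<rho> :: nat and \<beta> \<epsilon> :: real
  assumes "graph_class C" and "hereditary C" and "closed_disjoint_union C"
    and "rho_local \<rho> feas ver"
    and "cuttable ver C \<beta>" and "\<beta> > 0"
    and "\<epsilon> > 0"
  shows "\<forall>(r::nat) (\<alpha>::real) (A :: 'v graph \<Rightarrow> ('v \<Rightarrow> nat) \<Rightarrow> 'v \<Rightarrow> bool).
           \<alpha> > 0 \<longrightarrow> local_alg r A \<longrightarrow> approximation feas ver C \<alpha> A \<longrightarrow>
           weakly_uniform_approximation feas ver C \<epsilon> (r + 1) (\<alpha> * \<beta>) A"
proof (intro allI impI)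
  fix r :: nat and \<alpha> :: real and A :: "'v graph \<Rightarrow> ('v \<Rightarrow> nat) \<Rightarrow> 'v \<Rightarrow> bool"
  assume "\<alpha> > 0" and local: "local_alg r A" and approx: "approximation feas ver C \<alpha> A"
  show "weakly_uniform_approximation feas ver C \<epsilon> (r + 1) (\<alpha> * \<beta>) A"
    unfolding weakly_uniform_approximation_def
  proof (intro allI impI conjI)
    fix p G idf
    assume G: "G \<in> C" and ids: "valid_ids p G idf"
    show "feas G (alg_output A G idf)"
      using approx G ids unfolding approximation_def by blast
    fix S assume S: "S \<subseteq> verts G"
    obtain Y where "nbhd G (r + 1) S \<subseteq> Y"
      and cut: "real (OPT ver (induced G Y)) \<le> \<beta> * real (OPT_on ver G (nbhd G (r + 1) S))"
      using assms(5)[unfolded cuttable_def, rule_format, OF G nbhd_subset_verts] by blast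
    then have "real (card (alg_output A G idf \<inter> S)) \<le> \<alpha> * real (OPT ver (induced G Y))"
      using card_alg_output_Int_le_OPT_induced[OF assms(1) local approx G
          hereditary_induced_mem[OF assms(2,1) G] ids S] by simp
    also have "\<dots> \<le> \<alpha> * \<beta> * real (OPT_on ver G (nbhd G (r + 1) S))"
      using mult_left_mono[OF cut, of \<alpha>] \<open>\<alpha> > 0\<close> by (simp add: mult.assoc)
    finally show "real (card (alg_output A G idf \<inter> S))
        \<le> \<alpha> * \<beta> * real (OPT_on ver G (nbhd G (r + 1) S))" .
  qed
qed

end
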